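(* Let $A:\mathbb{R}^n\to\mathbb{R}^{n\times n}$ be symmetric-matrix valued, three times continuously differentiable at every $v\neq 0$, with $A(\alpha v)=A(v)$ for all $\alpha\in\mathbb{R}\setminus\{0\}$. Let $J(v):=\frac{\partial}{\partial v}(A(v)v)$, fix $\sigma\in\mathbb{R}$, and define, for $v$ with $J(v)-\sigma I$ nonsingular, $\psi(v):=(J(v)-\sigma I)^{-1}v$ and $\varphi(v):=\psi(v)/\|\psi(v)\|_2$. (a) Suppose $(\lambda_*,v_* )\in\mathbb{R}\times\mathbb{R}^n$ satisfies $A(v_* )v_*=\lambda_*v_*$ with $\|v_*\|_2=1$, and suppose $\sigma\neq\lambda_*$ and $J(v_* )-\sigma I$ is nonsingular. Then $\varphi(v_* )=v_*$ if $\sigma<\lambda_*$, and $\varphi(v_* )=-v_*$ if $\sigma>\lambda_*$. (b) Suppose $v_*$ is such that $J(v_* )-\sigma I$ is nonsingular and $v_*=\varphi(v_* )$ or $v_*=-\varphi(v_* )$. Then $A(v_* )v_*=\lambda_*v_*$ with $$\lambda_*:=\sigma\pm\frac{1}{\|(J(v_* )-\sigma I)^{-1}v_*\|_2}=v_*^TA(v_* )v_*,$$ where the sign $\pm$ corresponds to the case $\varphi(v_* )=\pm v_*$.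
   Context: $\|\cdot\|_2$ is the Euclidean norm; $\frac{\partial}{\partial v}$ denotes the Jacobian matrix. *)

theory Defs
  imports "HOL-Analysis.Analysis"
begin

definition C3_on :: "'a::real_normed_vector set \<Rightarrow> ('a \<Rightarrow> 'b::real_normed_vector) \<Rightarrow> bool" where
  "C3_on S f \<longleftrightarrow>
     (\<exists>(D1 :: 'a \<Rightarrow> ('a \<Rightarrow>\<^sub>L 'b)) (D2 :: 'a \<Rightarrow> ('a \<Rightarrow>\<^sub>L ('a \<Rightarrow>\<^sub>L 'b)))
        (D3 :: 'a \<Rightarrow> ('a \<Rightarrow>\<^sub>L ('a \<Rightarrow>\<^sub>L ('a \<Rightarrow>\<^sub>L 'b)))).
        (\<forall>x\<in>S. (f has_derivative blinfun_apply (D1 x)) (at x)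
              \<and> (D1 has_derivative blinfun_apply (D2 x)) (at x)
              \<and> (D2 has_derivative blinfun_apply (D3 x)) (at x))
        \<and> continuous_on S D3)"

end

theory Submission
  imports Defs
begin

text \<open>Scale invariance of \<open>A\<close> makes \<open>w \<mapsto> A(w) w\<close> positively homogeneous of degree one,
  so Euler's identity gives \<open>J(v) v = A(v) v\<close>. Hence \<open>v\<close> is an eigenvector of \<open>A(v)\<close> for \<open>\<lambda>\<close>
  exactly when it is an eigenvector of \<open>J(v) - \<sigma> I\<close> for \<open>\<lambda> - \<sigma>\<close>, i.e. of its inverse for
  \<open>1 / (\<lambda> - \<sigma>)\<close>, and normalising shows \<open>\<phi>(v) = sgn (\<lambda> - \<sigma>) v\<close>.\<close>

lemma bounded_bilinear_matrix_vector_mult: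
  "bounded_bilinear (\<lambda>(M::real^'n^'m) x. M *v x)"
proof -
  have "bilinear (\<lambda>(M::real^'n^'m) x. M *v x)"
    unfolding bilinear_def
    by (auto intro!: linearI simp: matrix_vector_mult_def vec_eq_iff algebra_simps sum.distrib sum_distrib_left)
  then show ?thesis by (simp add: bilinear_conv_bounded_bilinear)
qed

lemma C3_on_imp_differentiable: "C3_on S f \<Longrightarrow> x \<in> S \<Longrightarrow> f differentiable (at x)"
  unfolding C3_on_def differentiable_def by blast

lemma has_derivative_Euler_identity:
  fixes F :: "'a::real_normed_vector \<Rightarrow> 'b::real_normed_vector"
  assumes F': "(F has_derivative F') (at v)"
    and homogeneous: "\<And>t. t > 0 \<Longrightarrow> F (t *\<^sub>R v) = t *\<^sub>R F v"
  shows "F' v = F v"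
proof -
  have ray: "((\<lambda>t::real. v + t *\<^sub>R v) has_derivative (\<lambda>t. t *\<^sub>R v)) (at 0)"
    by (auto intro!: derivative_eq_intros)
  have "((\<lambda>t. F (v + t *\<^sub>R v)) has_derivative (\<lambda>t. F' (t *\<^sub>R v))) (at 0)"
    using has_derivative_compose[OF ray, of F F'] F' by (simp add: o_def)
  moreover have "((\<lambda>t. F (v + t *\<^sub>R v)) has_derivative (\<lambda>t. t *\<^sub>R F v)) (at 0)"
  proof (rule has_derivative_transform_within_open[where f="\<lambda>t. F v + t *\<^sub>R F v" and s="ball 0 1"])
    fix t :: real assume "t \<in> ball 0 1"
    then have "1 + t > 0" by auto
    then show "F v + t *\<^sub>R F v = F (v + t *\<^sub>R v)"
      using homogeneous[of "1 + t"] by (simp add: algebra_simps)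
  qed (auto intro!: derivative_eq_intros)
  ultimately have "(\<lambda>t. F' (t *\<^sub>R v)) = (\<lambda>t. t *\<^sub>R F v)"
    using has_derivative_unique by blast
  then show ?thesis by (metis scale_one)
qed

lemma jacobian_mult_self_scale_invariant:
  fixes A :: "real^'n \<Rightarrow> real^'n^'m"
  assumes "A differentiable (at v)" and "\<And>t. t > 0 \<Longrightarrow> A (t *\<^sub>R v) = A v"
  shows "jacobian (\<lambda>w. A w *v w) (at v) *v v = A v *v v"
proof -
  obtain D where "(A has_derivative D) (at v)"
    using assms(1) unfolding differentiable_def by blast
  then have "(\<lambda>w. A w *v w) differentiable (at v)"
    using bounded_bilinear.FDERIV[OF bounded_bilinear_matrix_vector_mult _ has_derivative_ident]
    unfolding differentiable_def by blast
  then have "((\<lambda>w. A w *v w) has_derivative (\<lambda>h. jacobian (\<lambda>w. A w *v w) (at v) *v h)) (at v)"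
    by (simp add: jacobian_works)
  then show ?thesis
    by (rule has_derivative_Euler_identity) (simp add: assms(2) matrix_vector_mult_scaleR)
qed

lemma matrix_inv_mult:
  fixes M :: "'a::semiring_1^'n^'m"
  assumes "invertible M"
  shows "M ** matrix_inv M = mat 1" "matrix_inv M ** M = mat 1"
  using assms someI_ex[of "\<lambda>N. M ** N = mat 1 \<and> N ** M = mat 1"]
  unfolding invertible_def matrix_inv_def by auto

lemma matrix_inv_mult_cancel:
  fixes M :: "'a::comm_semiring_1^'n^'n"
  assumes "invertible M"
  shows "M *v (matrix_inv M *v v) = v" and "matrix_inv M *v (M *v v) = v"
  using matrix_inv_mult[OF assms] by (simp_all add: matrix_vector_mul_assoc)

lemma scaleR_eq_imp_eq_inverse_scaleR:
  fixes x y :: "'a::real_vector"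
  assumes "x = c *\<^sub>R y" and "x = 0 \<Longrightarrow> y = 0"
  shows "y = inverse c *\<^sub>R x"
  using assms by (cases "c = 0") auto

lemma matrix_inv_mult_eigen_iff:
  fixes M :: "real^'n^'n"
  assumes "invertible M"
  shows "matrix_inv M *v v = c *\<^sub>R v \<longleftrightarrow> M *v v = inverse c *\<^sub>R v"
proof
  assume "matrix_inv M *v v = c *\<^sub>R v"
  then have "v = c *\<^sub>R (M *v v)"
    using matrix_inv_mult_cancel(1)[OF assms, of v] by (simp add: matrix_vector_mult_scaleR)
  then show "M *v v = inverse c *\<^sub>R v"
    by (rule scaleR_eq_imp_eq_inverse_scaleR) simp
next
  assume "M *v v = inverse c *\<^sub>R v"
  then have "v = inverse c *\<^sub>R (matrix_inv M *v v)"
    using matrix_inv_mult_cancel(2)[OF assms, of v] by (simp add: matrix_vector_mult_scaleR)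
  then have "matrix_inv M *v v = inverse (inverse c) *\<^sub>R v"
    by (rule scaleR_eq_imp_eq_inverse_scaleR) simp
  then show "matrix_inv M *v v = c *\<^sub>R v"
    by simp
qed

lemma sgn_matrix_inv_mult_eigenvector:
  fixes M :: "real^'n^'n"
  assumes "invertible M" and "M *v v = \<mu> *\<^sub>R v" and "norm v = 1"
  shows "sgn (matrix_inv M *v v) = sgn \<mu> *\<^sub>R v"
proof -
  have "matrix_inv M *v v = inverse \<mu> *\<^sub>R v"
    using assms(1,2) by (simp add: matrix_inv_mult_eigen_iff)
  moreover have "sgn v = v"
    using assms(3) by (simp add: sgn_div_norm)
  ultimately show ?thesis
    by (simp add: sgn_scaleR)
qed

lemma matrix_inv_mult_sgn_fixed_point:
  fixes M :: "real^'n^'n"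
  assumes "invertible M" and "sgn (matrix_inv M *v v) = s *\<^sub>R v" and "\<bar>s\<bar> = 1" and "v \<noteq> 0"
  shows "M *v v = (s / norm (matrix_inv M *v v)) *\<^sub>R v" and "norm v = 1"
proof -
  define x where "x = matrix_inv M *v v"
  have "x \<noteq> 0"
    using assms(2-4) by (auto simp: x_def)
  then show "norm v = 1"
    using arg_cong[OF assms(2), of norm] assms(3) by (simp add: x_def norm_sgn)
  have "x = norm x *\<^sub>R sgn x"
    by (simp add: sgn_div_norm \<open>x \<noteq> 0\<close>)
  then have "matrix_inv M *v v = (s * norm x) *\<^sub>R v"
    using assms(2) by (simp add: x_def ac_simps)
  then have "M *v v = inverse (s * norm x) *\<^sub>R v"
    using assms(1) by (simp add: matrix_inv_mult_eigen_iff)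
  also have "inverse (s * norm x) = s / norm x"
    using assms(3) by (cases "s \<ge> 0") (simp_all add: field_simps)
  finally show "M *v v = (s / norm (matrix_inv M *v v)) *\<^sub>R v"
    by (simp add: x_def)
qed

lemma inner_eigenvector_unit:
  fixes M :: "real^'n^'n"
  assumes "M *v v = c *\<^sub>R v" and "norm v = 1"
  shows "v \<bullet> (M *v v) = c"
  using assms by (simp add: dot_square_norm)

lemma matrix_vector_mult_shift:
  fixes J :: "real^'n^'n"
  shows "(J - c *\<^sub>R mat 1) *v x = J *v x - c *\<^sub>R x"
  by (simp add: matrix_vector_mult_diff_rdistrib scaleR_matrix_vector_assoc[symmetric])

lemma shift_invert_sgn_eigenvector:
  fixes A J :: "real^'n^'n"
  assumes "J *v v = A *v v" and "A *v v = lam *\<^sub>R v" and "norm v = 1"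
    and "invertible (J - \<sigma> *\<^sub>R mat 1)"
  shows "sgn (matrix_inv (J - \<sigma> *\<^sub>R mat 1) *v v) = sgn (lam - \<sigma>) *\<^sub>R v"
proof -
  have "(J - \<sigma> *\<^sub>R mat 1) *v v = (lam - \<sigma>) *\<^sub>R v"
    using assms(1,2) by (simp add: matrix_vector_mult_shift scaleR_diff_left)
  then show ?thesis
    using sgn_matrix_inv_mult_eigenvector[OF assms(4) _ assms(3)] by simp
qed

lemma shift_invert_fixed_point_eigenpair:
  fixes A J :: "real^'n^'n"
  assumes "J *v v = A *v v" and "invertible (J - \<sigma> *\<^sub>R mat 1)" and "v \<noteq> 0"
    and "sgn (matrix_inv (J - \<sigma> *\<^sub>R mat 1) *v v) = s *\<^sub>R v" and "\<bar>s\<bar> = 1"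
  defines "\<mu> \<equiv> \<sigma> + s / norm (matrix_inv (J - \<sigma> *\<^sub>R mat 1) *v v)"
  shows "A *v v = \<mu> *\<^sub>R v \<and> \<mu> = v \<bullet> (A *v v)"
proof -
  have "(J - \<sigma> *\<^sub>R mat 1) *v v = (s / norm (matrix_inv (J - \<sigma> *\<^sub>R mat 1) *v v)) *\<^sub>R v"
    and unit: "norm v = 1"
    using matrix_inv_mult_sgn_fixed_point[OF assms(2,4,5,3)] by simp_all
  then have "A *v v = \<mu> *\<^sub>R v"
    unfolding matrix_vector_mult_shift assms(1) by (simp add: \<mu>_def algebra_simps)
  with unit show ?thesis
    by (metis inner_eigenvector_unit)
qed

theorem proposition2:
  fixes A :: "real^'n \<Rightarrow> real^'n^'n" and \<sigma> :: real
    and J :: "real^'n \<Rightarrow> real^'n^'n" and \<psi> \<phi> :: "real^'n \<Rightarrow> real^'n"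
  assumes sym: "\<forall>v. transpose (A v) = A v"
    and smooth: "C3_on (UNIV - {0}) A"
    and scale_inv: "\<forall>v (\<alpha>::real). \<alpha> \<noteq> 0 \<longrightarrow> A (\<alpha> *\<^sub>R v) = A v"
    and J_def: "\<forall>v. J v = jacobian (\<lambda>w. A w *v w) (at v)"
    and \<psi>_def: "\<forall>v. \<psi> v = matrix_inv (J v - \<sigma> *\<^sub>R mat 1) *v v"
    and \<phi>_def: "\<forall>v. \<phi> v = (1 / norm (\<psi> v)) *\<^sub>R \<psi> v"
  shows "(\<forall>lam vs. A vs *v vs = lam *\<^sub>R vs \<and> norm vs = 1 \<and> \<sigma> \<noteq> lam
              \<and> invertible (J vs - \<sigma> *\<^sub>R mat 1)
            \<longrightarrow> (\<sigma> < lam \<longrightarrow> \<phi> vs = vs) \<and> (\<sigma> > lam \<longrightarrow> \<phi> vs = - vs))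
       \<and> (\<forall>vs. vs \<noteq> 0 \<and> invertible (J vs - \<sigma> *\<^sub>R mat 1)
            \<longrightarrow> (\<phi> vs = vs \<longrightarrow>
                   A vs *v vs = (\<sigma> + 1 / norm (\<psi> vs)) *\<^sub>R vs
                 \<and> \<sigma> + 1 / norm (\<psi> vs) = vs \<bullet> (A vs *v vs))
              \<and> (\<phi> vs = - vs \<longrightarrow>
                   A vs *v vs = (\<sigma> - 1 / norm (\<psi> vs)) *\<^sub>R vs
                 \<and> \<sigma> - 1 / norm (\<psi> vs) = vs \<bullet> (A vs *v vs)))"
proof -
  have \<phi>_sgn: "\<phi> v = sgn (matrix_inv (J v - \<sigma> *\<^sub>R mat 1) *v v)" for v
    using \<phi>_def \<psi>_def by (simp add: sgn_div_norm divide_inverse_commute)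
  have J_mult_self: "J v *v v = A v *v v" if "v \<noteq> 0" for v
    using jacobian_mult_self_scale_invariant[OF C3_on_imp_differentiable[OF smooth]] that scale_inv J_def
    by simp
  have part_a: "(\<sigma> < lam \<longrightarrow> \<phi> v = v) \<and> (\<sigma> > lam \<longrightarrow> \<phi> v = - v)"
    if "A v *v v = lam *\<^sub>R v" "norm v = 1" "invertible (J v - \<sigma> *\<^sub>R mat 1)" for lam v
  proof -
    have "v \<noteq> 0"
      using that(2) by auto
    with shift_invert_sgn_eigenvector[OF J_mult_self that] show ?thesis
      by (simp add: \<phi>_sgn)
  qed
  have part_b: "A v *v v = (\<sigma> + s / norm (\<psi> v)) *\<^sub>R v \<and> \<sigma> + s / norm (\<psi> v) = v \<bullet> (A v *v v)"
    if "v \<noteq> 0" "invertible (J v - \<sigma> *\<^sub>R mat 1)" "\<phi> v = s *\<^sub>R v" "\<bar>s\<bar> = 1" for v s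
  proof -
    have "sgn (matrix_inv (J v - \<sigma> *\<^sub>R mat 1) *v v) = s *\<^sub>R v"
      using that(3) by (simp add: \<phi>_sgn)
    from shift_invert_fixed_point_eigenpair[OF J_mult_self[OF that(1)] that(2,1) this that(4)]
    show ?thesis
      unfolding \<psi>_def[rule_format] .
  qed
  have "A v *v v = (\<sigma> - 1 / norm (\<psi> v)) *\<^sub>R v \<and> \<sigma> - 1 / norm (\<psi> v) = v \<bullet> (A v *v v)"
    if "v \<noteq> 0" "invertible (J v - \<sigma> *\<^sub>R mat 1)" "\<phi> v = - v" for v
  proof -
    have sign: "\<phi> v = (-1) *\<^sub>R v" "\<bar>-1::real\<bar> = 1"
      using that(3) by simp_all
    have "\<sigma> + -1 / norm (\<psi> v) = \<sigma> - 1 / norm (\<psi> v)"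
      by simp
    \<comment> \<open>not \<open>simp\<close>: the second conjunct of \<open>part_b\<close>, used as a rewrite rule, loops\<close>
    with part_b[OF that(1,2) sign] show ?thesis
      by argo
  qed
  moreover have "A v *v v = (\<sigma> + 1 / norm (\<psi> v)) *\<^sub>R v \<and> \<sigma> + 1 / norm (\<psi> v) = v \<bullet> (A v *v v)"
    if "v \<noteq> 0" "invertible (J v - \<sigma> *\<^sub>R mat 1)" "\<phi> v = v" for v
    by (rule part_b) (use that in simp_all)
  ultimately show ?thesis
    using part_a by blast
qed

end
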